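(* There is a polynomial $q$ such that for every $\mathsf{TL}[\Diamond^{-}]$ program $P$ with $L(P)\neq\emptyset$ there exists a string $w\in L(P)$ with $|w|\le q(|P|)$, where $|P|$ is the size of $P$.
   Context: $\mathsf{TL}[\Diamond^{-}]$ formulas over a finite alphabet $\Sigma$: $\phi ::= \sigma \mid \neg\phi \mid \phi_1\wedge\phi_2 \mid \Diamond^{-}\phi \mid \Box^{-}\phi$ with $\sigma\in\Sigma$. At position $i$ of $w$: $w,i\models\sigma$ iff $w_i=\sigma$; Boolean connectives as usual; $w,i\models\Diamond^{-}\phi$ iff $w,j\models\phi$ for some $j<i$; $w,i\models\Box^{-}\phi$ iff $w,j\models\phi$ for all $j\le i$. $w\models\phi$ iff $w,|w|\models\phi$, and $L(\phi)=\{w:w\models\phi\}$. A program is a straight-line (DAG) representation $(\phi_1,\dots,\phi_m)$ where $\phi_i$ may refer to earlier $\phi_j$, denoting $\phi_m$; its size is the total number of symbols, each reference to an earlier line counting as 1. *)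

theory Defs
  imports Main "HOL-Computational_Algebra.Polynomial"
begin

datatype 'a tl = TSym 'a | TNeg "'a tl" | TAnd "'a tl" "'a tl" | TDia "'a tl" | TBox "'a tl"

text \<open>Positions are 1-based: position i of w is letter w ! (i - 1), 1 <= i <= length w.\<close>
fun sat :: "'a list \<Rightarrow> nat \<Rightarrow> 'a tl \<Rightarrow> bool" where
  "sat w i (TSym a) = (w ! (i - 1) = a)"
| "sat w i (TNeg f) = (\<not> sat w i f)"
| "sat w i (TAnd f g) = (sat w i f \<and> sat w i g)"
| "sat w i (TDia f) = (\<exists>j. 1 \<le> j \<and> j < i \<and> sat w j f)"
| "sat w i (TBox f) = (\<forall>j. 1 \<le> j \<and> j \<le> i \<longrightarrow> sat w j f)"

definition lang :: "'a tl \<Rightarrow> 'a list set" where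
  "lang f = {w. w \<noteq> [] \<and> sat w (length w) f}"

text \<open>Program lines: formulas that may refer (by 0-based index) to earlier lines.\<close>
datatype 'a pform = PSym 'a | PNeg "'a pform" | PAnd "'a pform" "'a pform"
  | PDia "'a pform" | PBox "'a pform" | PRef nat

fun refs :: "'a pform \<Rightarrow> nat set" where
  "refs (PSym a) = {}"
| "refs (PNeg f) = refs f"
| "refs (PAnd f g) = refs f \<union> refs g"
| "refs (PDia f) = refs f"
| "refs (PBox f) = refs f"
| "refs (PRef j) = {j}"

definition wf_prog :: "'a pform list \<Rightarrow> bool" where
  "wf_prog P \<longleftrightarrow> P \<noteq> [] \<and> (\<forall>i < length P. \<forall>j \<in> refs (P ! i). j < i)"

fun subst :: "'a tl list \<Rightarrow> 'a pform \<Rightarrow> 'a tl" where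
  "subst E (PSym a) = TSym a"
| "subst E (PNeg f) = TNeg (subst E f)"
| "subst E (PAnd f g) = TAnd (subst E f) (subst E g)"
| "subst E (PDia f) = TDia (subst E f)"
| "subst E (PBox f) = TBox (subst E f)"
| "subst E (PRef j) = E ! j"

definition expansions :: "'a pform list \<Rightarrow> 'a tl list" where
  "expansions P = foldl (\<lambda>E f. E @ [subst E f]) [] P"

definition denot :: "'a pform list \<Rightarrow> 'a tl" where
  "denot P = last (expansions P)"

definition lang_prog :: "'a pform list \<Rightarrow> 'a list set" where
  "lang_prog P = lang (denot P)"

fun psize :: "'a pform \<Rightarrow> nat" where
  "psize (PSym a) = 1"
| "psize (PNeg f) = 1 + psize f"
| "psize (PAnd f g) = 1 + psize f + psize g"
| "psize (PDia f) = 1 + psize f"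
| "psize (PBox f) = 1 + psize f"
| "psize (PRef j) = 1"

definition prog_size :: "'a pform list \<Rightarrow> nat" where
  "prog_size P = sum_list (map psize P)"

end

theory Submission
  imports Defs
begin

text \<open>Thanks to sharing, the formula \<open>\<phi>\<close> denoted by a program \<open>P\<close> has at most \<open>|P|\<close>
  distinct subformulas. Along a word, a subformula \<open>\<diamond>\<^sup>-\<psi>\<close> once true, or \<open>\<box>\<^sup>-\<psi>\<close>
  once false, keeps that value at all later positions; so the set of these settled subformulas
  grows monotonically, takes at most \<open>|P| + 1\<close> values, and together with its letter gives
  each position one of at most \<open>|\<Sigma>| (|P| + 1)\<close> types. Two positions \<open>j' < j\<close> before the last
  one with the same type satisfy the same subformulas, and deleting \<open>j\<close> preserves the truth of
  every subformula at every other position, because \<open>j'\<close> stands in for \<open>j\<close> under the past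
  operators. Hence a shortest word of \<open>L(\<phi>)\<close> has length at most \<open>|\<Sigma>| (|P| + 1) + 1\<close>.\<close>

fun subformulas :: "'a tl \<Rightarrow> 'a tl set" where
  "subformulas (TSym a) = {TSym a}"
| "subformulas (TNeg f) = insert (TNeg f) (subformulas f)"
| "subformulas (TAnd f g) = insert (TAnd f g) (subformulas f \<union> subformulas g)"
| "subformulas (TDia f) = insert (TDia f) (subformulas f)"
| "subformulas (TBox f) = insert (TBox f) (subformulas f)"

lemma finite_subformulas [simp]: "finite (subformulas f)"
  by (induction f) auto

lemma subformulas_refl [simp]: "f \<in> subformulas f"
  by (cases f) auto

lemma subformulas_trans: "g \<in> subformulas f \<Longrightarrow> subformulas g \<subseteq> subformulas f"
  by (induction f) auto

fun psubformulas :: "'a pform \<Rightarrow> 'a pform set" where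
  "psubformulas (PSym a) = {PSym a}"
| "psubformulas (PNeg f) = insert (PNeg f) (psubformulas f)"
| "psubformulas (PAnd f g) = insert (PAnd f g) (psubformulas f \<union> psubformulas g)"
| "psubformulas (PDia f) = insert (PDia f) (psubformulas f)"
| "psubformulas (PBox f) = insert (PBox f) (psubformulas f)"
| "psubformulas (PRef j) = {PRef j}"

lemma finite_psubformulas [simp]: "finite (psubformulas f)"
  by (induction f) auto

lemma card_psubformulas_le: "card (psubformulas f) \<le> psize f"
proof (induction f)
  case (PAnd f g)
  have "card (psubformulas (PAnd f g)) \<le> Suc (card (psubformulas f \<union> psubformulas g))"
    by (simp add: card_insert_if)
  also have "\<dots> \<le> Suc (card (psubformulas f) + card (psubformulas g))"
    using card_Un_le by simp
  finally show ?case using PAnd by simp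
qed (auto simp: card_insert_if)

lemma subformulas_subst:
  "subformulas (subst E f) \<subseteq> subst E ` psubformulas f \<union> (\<Union>j\<in>refs f. subformulas (E ! j))"
  by (induction f) auto

lemma expansions_snoc: "expansions (P @ [f]) = expansions P @ [subst (expansions P) f]"
  by (simp add: expansions_def)

lemma length_expansions [simp]: "length (expansions P) = length P"
  by (induction P rule: rev_induct) (simp_all add: expansions_snoc, simp add: expansions_def)

lemma card_subformulas_expansions_le:
  assumes "\<forall>i<length P. \<forall>j\<in>refs (P ! i). j < i"
  shows "card (\<Union>f\<in>set (expansions P). subformulas f) \<le> prog_size P"
  using assms
proof (induction P rule: rev_induct)
  case Nil
  then show ?case by (simp add: expansions_def)
next
  case (snoc f P)
  let ?E = "expansions P"
  let ?U = "\<Union>g\<in>set ?E. subformulas g"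
  have backward: "\<forall>i<length P. \<forall>j\<in>refs (P ! i). j < i"
    using snoc.prems by (auto simp: nth_append)
  have "\<forall>j\<in>refs f. j < length ?E"
    using snoc.prems[rule_format, of "length P"] by simp
  then have "subformulas (subst ?E f) \<subseteq> ?U \<union> subst ?E ` psubformulas f"
    using subformulas_subst[of ?E f] by fastforce
  then have "card (\<Union>g\<in>set (expansions (P @ [f])). subformulas g)
      \<le> card (?U \<union> subst ?E ` psubformulas f)"
    by (intro card_mono) (auto simp: expansions_snoc)
  also have "\<dots> \<le> card ?U + card (psubformulas f)"
    using card_Un_le card_image_le[of "psubformulas f" "subst ?E"]
    by (meson add_left_mono finite_psubformulas le_trans)
  also have "\<dots> \<le> prog_size P + psize f"
    using snoc.IH[OF backward] card_psubformulas_le[of f] by simp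
  finally show ?case by (simp add: prog_size_def)
qed

lemma card_subformulas_denot_le:
  assumes "wf_prog P"
  shows "card (subformulas (denot P)) \<le> prog_size P"
proof -
  have "expansions P \<noteq> []"
    using assms by (metis length_expansions length_0_conv wf_prog_def)
  then have "denot P \<in> set (expansions P)"
    by (simp add: denot_def)
  then have "card (subformulas (denot P)) \<le> card (\<Union>f\<in>set (expansions P). subformulas f)"
    by (intro card_mono) auto
  also have "\<dots> \<le> prog_size P"
    using assms card_subformulas_expansions_le by (auto simp: wf_prog_def)
  finally show ?thesis .
qed

lemma card_image_chain_le:
  fixes F :: "'i::linorder \<Rightarrow> 'b set"
  assumes "finite S" and "\<And>i. F i \<subseteq> S" and "\<And>i k. i \<le> k \<Longrightarrow> F i \<subseteq> F k"
  shows "card (F ` I) \<le> card S + 1"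
proof -
  have "inj_on card (F ` I)"
  proof (rule inj_onI)
    fix A B assume "A \<in> F ` I" "B \<in> F ` I" and card_eq: "card A = card B"
    then obtain i k where "A = F i" "B = F k"
      by blast
    then have "A \<subseteq> B \<or> B \<subseteq> A" and "finite A" "finite B"
      using assms le_cases[of i k] by (metis, metis finite_subset, metis finite_subset)
    then show "A = B" using card_eq card_subset_eq by metis
  qed
  then have "card (F ` I) = card (card ` F ` I)"
    by (simp add: card_image)
  also have "\<dots> \<le> card {0..card S}"
    using assms(1,2) by (intro card_mono) (auto simp: card_mono)
  finally show ?thesis by simp
qed

fun settled :: "'a list \<Rightarrow> nat \<Rightarrow> 'a tl \<Rightarrow> bool" where
  "settled w i (TDia f) = sat w i (TDia f)"
| "settled w i (TBox f) = (\<not> sat w i (TBox f))"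
| "settled w i _ = False"

lemma settled_mono: "settled w i \<psi> \<Longrightarrow> i \<le> k \<Longrightarrow> settled w k \<psi>"
  by (cases \<psi>) force+

definition settled_set :: "'a tl set \<Rightarrow> 'a list \<Rightarrow> nat \<Rightarrow> 'a tl set" where
  "settled_set S w i = {\<psi> \<in> S. settled w i \<psi>}"

lemma settled_set_subset: "settled_set S w i \<subseteq> S"
  by (simp add: settled_set_def)

lemma settled_set_mono: "i \<le> k \<Longrightarrow> settled_set S w i \<subseteq> settled_set S w k"
  by (auto simp: settled_set_def intro: settled_mono)

lemma sat_eq_if_same_type:
  assumes "w ! (a - 1) = w ! (b - 1)" and "settled_set S w a = settled_set S w b"
    and "subformulas \<psi> \<subseteq> S"
  shows "sat w a \<psi> = sat w b \<psi>"
  using assms(3)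
proof (induction \<psi>)
  case (TDia f)
  moreover have "TDia f \<in> settled_set S w a \<longleftrightarrow> TDia f \<in> settled_set S w b"
    using assms(2) by simp
  ultimately have "settled w a (TDia f) = settled w b (TDia f)"
    by (simp add: settled_set_def)
  then show ?case by simp
next
  case (TBox f)
  moreover have "TBox f \<in> settled_set S w a \<longleftrightarrow> TBox f \<in> settled_set S w b"
    using assms(2) by simp
  ultimately have "settled w a (TBox f) = settled w b (TBox f)"
    by (simp add: settled_set_def)
  then show ?case by auto
qed (use assms(1) in auto)

lemma card_position_types_le:
  fixes w :: "'a::finite list"
  assumes "finite S"
  shows "card ((\<lambda>i. (w ! (i - 1), settled_set S w i)) ` I) \<le> card (UNIV :: 'a set) * (card S + 1)"
proof -
  have "finite (settled_set S w ` I)"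
    using assms by (auto intro: finite_subset[of _ "Pow S"] simp: settled_set_def)
  moreover have "(\<lambda>i. (w ! (i - 1), settled_set S w i)) ` I \<subseteq> UNIV \<times> settled_set S w ` I"
    by auto
  ultimately have "card ((\<lambda>i. (w ! (i - 1), settled_set S w i)) ` I)
      \<le> card (UNIV :: 'a set) * card (settled_set S w ` I)"
    by (metis card_cartesian_product card_mono finite_SigmaI finite_UNIV)
  also have "\<dots> \<le> card (UNIV :: 'a set) * (card S + 1)"
    using card_image_chain_le[OF assms settled_set_subset settled_set_mono]
    by (rule mult_le_mono2)
  finally show ?thesis .
qed

definition delete_at :: "nat \<Rightarrow> 'a list \<Rightarrow> 'a list" where
  "delete_at j w = take (j - 1) w @ drop j w"

definition skip :: "nat \<Rightarrow> nat \<Rightarrow> nat" where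
  "skip j i = (if i < j then i else Suc i)"

lemma length_delete_at: "1 \<le> j \<Longrightarrow> j \<le> length w \<Longrightarrow> length (delete_at j w) = length w - 1"
  by (simp add: delete_at_def)

lemma nth_delete_at:
  "1 \<le> i \<Longrightarrow> 1 \<le> j \<Longrightarrow> j \<le> length w \<Longrightarrow> i < length w \<Longrightarrow>
    delete_at j w ! (i - 1) = w ! (skip j i - 1)"
  by (auto simp: delete_at_def skip_def nth_append min_def)

lemma skip_image_atLeastLessThan: "1 \<le> j \<Longrightarrow> skip j ` {1..<i} = {1..<skip j i} - {j}"
proof
  show "{1..<skip j i} - {j} \<subseteq> skip j ` {1..<i}" if "1 \<le> j"
  proof
    fix m assume "m \<in> {1..<skip j i} - {j}"
    with that show "m \<in> skip j ` {1..<i}"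
      by (intro image_eqI[of _ _ "if m < j then m else m - 1"]) (auto simp: skip_def split: if_splits)
  qed
qed (auto simp: skip_def)

lemma skip_image_atLeastAtMost: "1 \<le> j \<Longrightarrow> skip j ` {1..i} = {1..skip j i} - {j}"
proof
  show "{1..skip j i} - {j} \<subseteq> skip j ` {1..i}" if "1 \<le> j"
  proof
    fix m assume "m \<in> {1..skip j i} - {j}"
    with that show "m \<in> skip j ` {1..i}"
      by (intro image_eqI[of _ _ "if m < j then m else m - 1"]) (auto simp: skip_def split: if_splits)
  qed
qed (auto simp: skip_def)

lemma bex_atLeastLessThan_skip:
  assumes "1 \<le> j'" "j' < j" and twin: "P j = P j'"
  shows "(\<exists>m\<in>{1..<i}. P (skip j m)) \<longleftrightarrow> (\<exists>m\<in>{1..<skip j i}. P m)"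
proof -
  have "(\<exists>m\<in>{1..<i}. P (skip j m)) \<longleftrightarrow> (\<exists>m\<in>{1..<skip j i} - {j}. P m)"
    using assms(1,2) by (subst skip_image_atLeastLessThan[symmetric]) auto
  also have "\<dots> \<longleftrightarrow> (\<exists>m\<in>{1..<skip j i}. P m)"
  proof
    assume "\<exists>m\<in>{1..<skip j i}. P m"
    then obtain m where m: "m \<in> {1..<skip j i}" "P m"
      by blast
    show "\<exists>m\<in>{1..<skip j i} - {j}. P m"
    proof (cases "m = j")
      case True
      then show ?thesis
        using m twin assms(1,2) by (intro bexI[of _ j']) auto
    qed (use m in auto)
  qed auto
  finally show ?thesis .
qed

lemma ball_atLeastAtMost_skip:
  assumes "1 \<le> j'" "j' < j" and twin: "P j = P j'"
  shows "(\<forall>m\<in>{1..i}. P (skip j m)) \<longleftrightarrow> (\<forall>m\<in>{1..skip j i}. P m)"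
proof -
  have "(\<forall>m\<in>{1..i}. P (skip j m)) \<longleftrightarrow> (\<forall>m\<in>{1..skip j i} - {j}. P m)"
    using assms(1,2) by (subst skip_image_atLeastAtMost[symmetric]) auto
  also have "\<dots> \<longleftrightarrow> (\<forall>m\<in>{1..skip j i}. P m)"
  proof
    assume all: "\<forall>m\<in>{1..skip j i} - {j}. P m"
    show "\<forall>m\<in>{1..skip j i}. P m"
    proof
      fix m assume m: "m \<in> {1..skip j i}"
      show "P m"
      proof (cases "m = j")
        case True
        then show ?thesis
          using m twin assms(1,2) all[rule_format, of j'] by auto
      qed (use m all in auto)
    qed
  qed auto
  finally show ?thesis .
qed

lemma sat_delete_at:
  assumes "1 \<le> j'" "j' < j" "j \<le> length w"
    and "\<forall>\<chi>\<in>subformulas \<psi>. sat w j \<chi> = sat w j' \<chi>"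
  shows "1 \<le> i \<Longrightarrow> i < length w \<Longrightarrow> sat (delete_at j w) i \<psi> = sat w (skip j i) \<psi>"
  using assms(4)
proof (induction \<psi> arbitrary: i)
  case (TSym a)
  then show ?case using nth_delete_at[of i j w] assms by simp
next
  case (TDia f)
  have IH: "sat (delete_at j w) m f = sat w (skip j m) f" if "1 \<le> m" "m < length w" for m
    using TDia that by simp
  have "sat (delete_at j w) i (TDia f) \<longleftrightarrow> (\<exists>m\<in>{1..<i}. sat w (skip j m) f)"
    using IH \<open>i < length w\<close> by auto
  also have "\<dots> \<longleftrightarrow> (\<exists>m\<in>{1..<skip j i}. sat w m f)"
    using TDia.prems assms(1,2) by (intro bex_atLeastLessThan_skip) simp_all
  finally show ?case by auto
next
  case (TBox f)
  have IH: "sat (delete_at j w) m f = sat w (skip j m) f" if "1 \<le> m" "m < length w" for m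
    using TBox that by simp
  have "sat (delete_at j w) i (TBox f) \<longleftrightarrow> (\<forall>m\<in>{1..i}. sat w (skip j m) f)"
    using IH \<open>i < length w\<close> by auto
  also have "\<dots> \<longleftrightarrow> (\<forall>m\<in>{1..skip j i}. sat w m f)"
    using TBox.prems assms(1,2) by (intro ball_atLeastAtMost_skip) simp_all
  finally show ?case by auto
qed simp_all

lemma ex_shorter_word_in_lang:
  fixes \<phi> :: "'a::finite tl"
  assumes w: "w \<in> lang \<phi>"
    and long: "card (UNIV :: 'a set) * (card (subformulas \<phi>) + 1) + 1 < length w"
  shows "\<exists>w'\<in>lang \<phi>. length w' < length w"
proof -
  let ?S = "subformulas \<phi>" and ?n = "length w"
  define type where "type i = (w ! (i - 1), settled_set ?S w i)" for i
  have "card (type ` {1..<?n}) < card {1..<?n}"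
    using card_position_types_le[of ?S w "{1..<?n}"] long by (simp add: type_def)
  then have "\<not> inj_on type {1..<?n}"
    by (rule pigeonhole)
  then obtain a b where ab: "a \<in> {1..<?n}" "b \<in> {1..<?n}" "a < b" "type a = type b"
    by (metis inj_onI linorder_neq_iff)
  have agree: "\<forall>\<chi>\<in>?S. sat w b \<chi> = sat w a \<chi>"
  proof
    fix \<chi> assume "\<chi> \<in> ?S"
    then show "sat w b \<chi> = sat w a \<chi>"
      using ab(4) by (intro sat_eq_if_same_type[of w b a ?S]) (auto simp: type_def subformulas_trans)
  qed
  have "sat (delete_at b w) (?n - 1) \<phi> = sat w (skip b (?n - 1)) \<phi>"
    using ab agree by (intro sat_delete_at) auto
  moreover have "skip b (?n - 1) = ?n"
    using ab by (auto simp: skip_def)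
  moreover have "length (delete_at b w) = ?n - 1"
    using ab by (simp add: length_delete_at)
  ultimately have "delete_at b w \<in> lang \<phi>"
    using w ab by (auto simp: lang_def)
  then show ?thesis
    using \<open>length (delete_at b w) = ?n - 1\<close> ab by (intro bexI[of _ "delete_at b w"]) auto
qed

lemma ex_short_word_in_lang:
  fixes \<phi> :: "'a::finite tl"
  assumes "lang \<phi> \<noteq> {}"
  shows "\<exists>w\<in>lang \<phi>. length w \<le> card (UNIV :: 'a set) * (card (subformulas \<phi>) + 1) + 1"
proof -
  obtain w where w: "w \<in> lang \<phi>" and shortest: "\<And>w'. w' \<in> lang \<phi> \<Longrightarrow> length w \<le> length w'"
    using assms ex_has_least_nat[of "\<lambda>w. w \<in> lang \<phi>" _ length] by blast
  then show ?thesis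
    using ex_shorter_word_in_lang[OF w] by (meson leD not_le)
qed

theorem lemma4p5:
  "\<exists>q :: real poly. \<forall>P :: ('a::finite) pform list.
     wf_prog P \<and> lang_prog P \<noteq> {} \<longrightarrow>
     (\<exists>w \<in> lang_prog P. real (length w) \<le> poly q (real (prog_size P)))"
proof -
  define k where "k = card (UNIV :: 'a set)"
  have "\<exists>w\<in>lang_prog P. real (length w) \<le> poly [:real k + 1, real k:] (real (prog_size P))"
    if "wf_prog P \<and> lang_prog P \<noteq> {}" for P :: "'a pform list"
  proof -
    have "lang (denot P) \<noteq> {}"
      using that by (simp add: lang_prog_def)
    then obtain w where w: "w \<in> lang_prog P"
      and short: "length w \<le> k * (card (subformulas (denot P)) + 1) + 1"
      using ex_short_word_in_lang unfolding lang_prog_def k_def by blast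
    have "length w \<le> k * (prog_size P + 1) + 1"
      using short card_subformulas_denot_le[of P] that
      by (meson add_le_mono1 le_trans mult_le_mono2)
    then have "real (length w) \<le> real (k * (prog_size P + 1) + 1)"
      by (simp only: of_nat_le_iff)
    also have "\<dots> = poly [:real k + 1, real k:] (real (prog_size P))"
      by (simp add: algebra_simps)
    finally show ?thesis
      using w ..
  qed
  then show ?thesis
    by blast
qed

end
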